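(* Let $I$ be an ideal on a cardinal $\kappa$ and let $\theta$ be a regular cardinal. Then $I$ is $\theta$-decomposable (i.e. not $\theta$-indecomposable) if and only if there is a sequence $\langle A_i:i<\theta\rangle$ of $I$-positive subsets of $\kappa$ which are pairwise equal modulo $I$ and satisfy $\bigcap_{i<\theta}\bigcup_{i\leq j<\theta}A_j=\emptyset$.
   Context: By an ideal on a cardinal $\kappa$ we mean a proper ideal on $\kappa$ containing all bounded subsets of $\kappa$. $A$ is $I$-positive if $A\notin I$; $A,B$ are equal modulo $I$ if $A\setminus B\in I$ and $B\setminus A\in I$. $I$ is $\theta$-indecomposable if whenever $\langle A_i:i<\theta\rangle$ are subsets of $\kappa$ with $\bigcup_{i<\theta}A_i\notin I$, there is $w\subseteq\theta$ with $|w|<\theta$ and $\bigcup_{i\in w}A_i\notin I$. *)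

theory Defs
  imports Main
begin

text \<open>A cardinal kappa is represented by a cardinal well-order r (Card_order r);
  kappa is its field. Subsets of kappa are subsets of Field r.\<close>

definition bounded_in :: "'a rel \<Rightarrow> 'a set \<Rightarrow> bool" where
  "bounded_in r A \<longleftrightarrow> A \<subseteq> Field r \<and> (\<exists>\<alpha>\<in>Field r. \<forall>x\<in>A. (x, \<alpha>) \<in> r)"

definition is_ideal_on :: "'a rel \<Rightarrow> 'a set set \<Rightarrow> bool" where
  "is_ideal_on r I \<longleftrightarrow>
     (\<forall>X\<in>I. X \<subseteq> Field r) \<and>
     {} \<in> I \<and>
     (\<forall>X\<in>I. \<forall>Y. Y \<subseteq> X \<longrightarrow> Y \<in> I) \<and>
     (\<forall>X\<in>I. \<forall>Y\<in>I. X \<union> Y \<in> I) \<and>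
     Field r \<notin> I \<and>
     (\<forall>A. bounded_in r A \<longrightarrow> A \<in> I)"

text \<open>theta is represented by a cardinal well-order s; the index set is Field s.\<close>
definition indecomposable :: "'a rel \<Rightarrow> 'a set set \<Rightarrow> 'b rel \<Rightarrow> bool" where
  "indecomposable r I s \<longleftrightarrow>
     (\<forall>A :: 'b \<Rightarrow> 'a set.
        (\<forall>i\<in>Field s. A i \<subseteq> Field r) \<longrightarrow> (\<Union>i\<in>Field s. A i) \<notin> I \<longrightarrow>
        (\<exists>w. w \<subseteq> Field s \<and> (card_of w, s) \<in> ordLess \<and> (\<Union>i\<in>w. A i) \<notin> I))"

definition eq_mod :: "'a set set \<Rightarrow> 'a set \<Rightarrow> 'a set \<Rightarrow> bool" where
  "eq_mod I A B \<longleftrightarrow> A - B \<in> I \<and> B - A \<in> I"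

end

theory Submission
  imports Defs
begin

text \<open>If \<open>A\<^sub>i\<close> (\<open>i < \<theta>\<close>) witnesses decomposability, with positive union \<open>U\<close>, then
  \<open>C\<^sub>i = U - \<Union>{A\<^sub>j | j < i}\<close> is the required sequence: the removed initial unions are
  small, hence in \<open>I\<close>, so each \<open>C\<^sub>i\<close> is positive and any two differ by a set in \<open>I\<close>; and
  a point of \<open>A\<^sub>k\<close> lies in no \<open>C\<^sub>j\<close> with \<open>j > k\<close>.
  Conversely, given such a sequence, fix \<open>i\<^sub>0\<close> and put \<open>E\<^sub>i = A\<^sub>i\<^sub>0 - \<Union>{A\<^sub>j | i \<le> j}\<close>.
  The empty limsup gives \<open>\<Union>\<^sub>i E\<^sub>i = A\<^sub>i\<^sub>0\<close>, which is positive, while by regularity a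
  small index set is bounded by some \<open>a\<close>, so its \<open>E\<close>-union lies in \<open>A\<^sub>i\<^sub>0 - A\<^sub>a \<in> I\<close>.\<close>

lemma ideal_on_subset: "is_ideal_on r I \<Longrightarrow> X \<in> I \<Longrightarrow> Y \<subseteq> X \<Longrightarrow> Y \<in> I"
  unfolding is_ideal_on_def by blast

lemma ideal_on_Un: "is_ideal_on r I \<Longrightarrow> X \<in> I \<Longrightarrow> Y \<in> I \<Longrightarrow> X \<union> Y \<in> I"
  unfolding is_ideal_on_def by blast

lemma not_indecomposableI:
  assumes "\<forall>i\<in>Field s. A i \<subseteq> Field r" "(\<Union>i\<in>Field s. A i) \<notin> I"
    and "\<And>w. w \<subseteq> Field s \<Longrightarrow> (card_of w, s) \<in> ordLess \<Longrightarrow> (\<Union>i\<in>w. A i) \<in> I"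
  shows "\<not> indecomposable r I s"
  using assms unfolding indecomposable_def by blast

lemma regularCard_small_bounded:
  assumes "Card_order s" "regularCard s"
    and "w \<subseteq> Field s" "(card_of w, s) \<in> ordLess"
  obtains a where "a \<in> Field s" "\<And>b. b \<in> w \<Longrightarrow> (b, a) \<in> s"
proof -
  have "\<not> cofinal w s"
    using assms not_ordLess_ordIso unfolding regularCard_def by blast
  then obtain a where a: "a \<in> Field s" and not_above: "\<And>b. b \<in> w \<Longrightarrow> \<not> (a \<noteq> b \<and> (a, b) \<in> s)"
    unfolding cofinal_def by blast
  have "(b, a) \<in> s" if "b \<in> w" for b
    using wo_rel.TOTALS[OF Card_order_wo_rel[OF assms(1)]] a not_above[OF that] assms(3) that
    by blast
  then show thesis using that a by blast
qed

lemma limsup_remainders_subset: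
  assumes "Card_order s" "\<not> finite (Field s)"
  shows "(\<Inter>i\<in>Field s. \<Union>j\<in>{j. (i, j) \<in> s}. U - (\<Union>k\<in>underS s j. A k))
           \<subseteq> U - (\<Union>k\<in>Field s. A k)"
proof
  fix x assume x: "x \<in> (\<Inter>i\<in>Field s. \<Union>j\<in>{j. (i, j) \<in> s}. U - (\<Union>k\<in>underS s j. A k))"
  have wo: "wo_rel s"
    using Card_order_wo_rel[OF assms(1)] .
  have "x \<notin> A k" if k: "k \<in> Field s" for k
  proof -
    obtain k' where k': "k' \<in> Field s" "k \<noteq> k'" "(k, k') \<in> s"
      using infinite_Card_order_limit[OF assms k] by blast
    with x obtain j where j: "(k', j) \<in> s" "x \<notin> (\<Union>k\<in>underS s j. A k)"
      by blast
    have "k \<in> underS s j"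
      using k'(2,3) underS_incr[OF wo_rel.TRANS[OF wo] wo_rel.ANTISYM[OF wo] j(1)]
      unfolding underS_def by blast
    then show ?thesis using j(2) by blast
  qed
  moreover obtain i where "i \<in> Field s"
    using assms(2) by (metis finite.emptyI ex_in_conv)
  then have "x \<in> U" using x by blast
  ultimately show "x \<in> U - (\<Union>k\<in>Field s. A k)" by blast
qed

lemma tail_sequence_of_decomposition:
  assumes ideal: "is_ideal_on r I"
    and s: "Card_order s" "\<not> finite (Field s)"
    and A_sub: "\<forall>i\<in>Field s. A i \<subseteq> Field r"
    and A_pos: "(\<Union>i\<in>Field s. A i) \<notin> I"
    and A_small: "\<And>w. w \<subseteq> Field s \<Longrightarrow> (card_of w, s) \<in> ordLess \<Longrightarrow> (\<Union>i\<in>w. A i) \<in> I"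
  defines "C \<equiv> \<lambda>i. (\<Union>k\<in>Field s. A k) - (\<Union>k\<in>underS s i. A k)"
  shows "\<forall>i\<in>Field s. C i \<subseteq> Field r \<and> C i \<notin> I"
    and "\<forall>i\<in>Field s. \<forall>j\<in>Field s. eq_mod I (C i) (C j)"
    and "(\<Inter>i\<in>Field s. \<Union>j\<in>{j. (i, j) \<in> s}. C j) = {}"
proof -
  have initial_small: "(\<Union>k\<in>underS s i. A k) \<in> I" if "i \<in> Field s" for i
    using A_small[OF Order_Relation.underS_Field card_of_underS[OF s(1) that]] .
  have "C i \<notin> I" if "i \<in> Field s" for i
  proof
    assume "C i \<in> I"
    then have "C i \<union> (\<Union>k\<in>underS s i. A k) \<in> I"
      using ideal_on_Un[OF ideal _ initial_small[OF that]] by blast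
    moreover have "(\<Union>k\<in>Field s. A k) \<subseteq> C i \<union> (\<Union>k\<in>underS s i. A k)"
      unfolding C_def by blast
    ultimately show False
      using ideal_on_subset[OF ideal] A_pos by blast
  qed
  then show "\<forall>i\<in>Field s. C i \<subseteq> Field r \<and> C i \<notin> I"
    using A_sub unfolding C_def by blast
  show "\<forall>i\<in>Field s. \<forall>j\<in>Field s. eq_mod I (C i) (C j)"
  proof (intro ballI)
    fix i j assume "i \<in> Field s" "j \<in> Field s"
    moreover have "C i - C j \<subseteq> (\<Union>k\<in>underS s j. A k)" "C j - C i \<subseteq> (\<Union>k\<in>underS s i. A k)"
      unfolding C_def by blast+
    ultimately show "eq_mod I (C i) (C j)"
      unfolding eq_mod_def using ideal_on_subset[OF ideal initial_small] by blast
  qed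
  show "(\<Inter>i\<in>Field s. \<Union>j\<in>{j. (i, j) \<in> s}. C j) = {}"
    using limsup_remainders_subset[OF s, of "\<Union>k\<in>Field s. A k" A] unfolding C_def by blast
qed

lemma decomposition_of_tail_sequence:
  assumes ideal: "is_ideal_on r I"
    and s: "Card_order s" "regularCard s"
    and i0: "i0 \<in> Field s"
    and A_pos: "\<forall>i\<in>Field s. A i \<subseteq> Field r \<and> A i \<notin> I"
    and A_eq: "\<forall>i\<in>Field s. \<forall>j\<in>Field s. eq_mod I (A i) (A j)"
    and A_limsup: "(\<Inter>i\<in>Field s. \<Union>j\<in>{j. (i, j) \<in> s}. A j) = {}"
  defines "E \<equiv> \<lambda>i. A i0 - (\<Union>j\<in>{j. (i, j) \<in> s}. A j)"
  shows "\<forall>i\<in>Field s. E i \<subseteq> Field r"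
    and "(\<Union>i\<in>Field s. E i) \<notin> I"
    and "\<And>w. w \<subseteq> Field s \<Longrightarrow> (card_of w, s) \<in> ordLess \<Longrightarrow> (\<Union>i\<in>w. E i) \<in> I"
proof -
  show "\<forall>i\<in>Field s. E i \<subseteq> Field r"
    using A_pos i0 unfolding E_def by blast
  have "(\<Union>i\<in>Field s. E i) = A i0"
    using A_limsup unfolding E_def by blast
  then show "(\<Union>i\<in>Field s. E i) \<notin> I"
    using A_pos i0 by simp
next
  fix w assume w: "w \<subseteq> Field s" "(card_of w, s) \<in> ordLess"
  obtain a where a: "a \<in> Field s" "\<And>b. b \<in> w \<Longrightarrow> (b, a) \<in> s"
    using regularCard_small_bounded[OF s w] by blast
  have "(\<Union>i\<in>w. E i) \<subseteq> A i0 - A a"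
    unfolding E_def using a(2) by blast
  moreover have "A i0 - A a \<in> I"
    using A_eq i0 a(1) unfolding eq_mod_def by blast
  ultimately show "(\<Union>i\<in>w. E i) \<in> I"
    using ideal_on_subset[OF ideal] by blast
qed

theorem proposition2p2:
  fixes r :: "'a rel" and s :: "'b rel" and I :: "'a set set"
  assumes "Card_order r"
    and "is_ideal_on r I"
    and "Card_order s" and "Cinfinite s" and "regularCard s"
  shows "\<not> indecomposable r I s \<longleftrightarrow>
    (\<exists>A :: 'b \<Rightarrow> 'a set.
       (\<forall>i\<in>Field s. A i \<subseteq> Field r \<and> A i \<notin> I) \<and>
       (\<forall>i\<in>Field s. \<forall>j\<in>Field s. eq_mod I (A i) (A j)) \<and>
       (\<Inter>i\<in>Field s. \<Union>j\<in>{j. (i, j) \<in> s}. A j) = {})"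
proof
  have infinite: "\<not> finite (Field s)"
    using assms(4) unfolding cinfinite_def by simp
  assume "\<not> indecomposable r I s"
  then obtain A :: "'b \<Rightarrow> 'a set" where
    "\<forall>i\<in>Field s. A i \<subseteq> Field r" "(\<Union>i\<in>Field s. A i) \<notin> I"
    "\<And>w. w \<subseteq> Field s \<Longrightarrow> (card_of w, s) \<in> ordLess \<Longrightarrow> (\<Union>i\<in>w. A i) \<in> I"
    unfolding indecomposable_def by blast
  from tail_sequence_of_decomposition[OF assms(2,3) infinite this]
  show "\<exists>A :: 'b \<Rightarrow> 'a set.
      (\<forall>i\<in>Field s. A i \<subseteq> Field r \<and> A i \<notin> I) \<and>
      (\<forall>i\<in>Field s. \<forall>j\<in>Field s. eq_mod I (A i) (A j)) \<and>
      (\<Inter>i\<in>Field s. \<Union>j\<in>{j. (i, j) \<in> s}. A j) = {}"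
    by (intro exI conjI)
next
  obtain i0 where i0: "i0 \<in> Field s"
    using assms(4) unfolding cinfinite_def by (metis finite.emptyI ex_in_conv)
  assume "\<exists>A :: 'b \<Rightarrow> 'a set.
      (\<forall>i\<in>Field s. A i \<subseteq> Field r \<and> A i \<notin> I) \<and>
      (\<forall>i\<in>Field s. \<forall>j\<in>Field s. eq_mod I (A i) (A j)) \<and>
      (\<Inter>i\<in>Field s. \<Union>j\<in>{j. (i, j) \<in> s}. A j) = {}"
  then obtain A :: "'b \<Rightarrow> 'a set" where
    "\<forall>i\<in>Field s. A i \<subseteq> Field r \<and> A i \<notin> I"
    "\<forall>i\<in>Field s. \<forall>j\<in>Field s. eq_mod I (A i) (A j)"
    "(\<Inter>i\<in>Field s. \<Union>j\<in>{j. (i, j) \<in> s}. A j) = {}"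
    by blast
  from decomposition_of_tail_sequence[OF assms(2,3,5) i0 this]
  show "\<not> indecomposable r I s"
    by (rule not_indecomposableI)
qed

end
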